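(* Let $j>0$, $\delta>0$ and $u,v\in\mathcal U_\delta$. Then $$F\big(0;|K^{(\delta)}u-K^{(\delta)}v|\big)\le F\big(0;|u-v|\big),\qquad F\big(0;|K^{(\delta)}u-u|\big)\le 2j\delta.$$
   Context: For a positive measure $\mu$ on $[0,1]$, $F(r;\mu)=\mu([r,1])$. $\mathcal U$ = measures $u=c_uD_0+\rho_u(r)dr$ with $c_u\ge0$, $\rho_u\in L^\infty([0,1],\mathbb R_+)$, $D_0$ the Dirac mass at $0$. For $u,v\in\mathcal U$, $|u-v|=|c_u-c_v|D_0+|\rho_u-\rho_v|$ (so $F(0;|u-v|)=|c_u-c_v|+\int_0^1|\rho_u-\rho_v|$). $\mathcal U_\delta=\{u\in\mathcal U:\int_0^1\rho_u>j\delta\}$, and $K^{(\delta)}u=j\delta D_0+\mathbf 1_{[0,R_\delta(u)]}u$ with $R_\delta(u)=\inf\{r:F(r;u)=j\delta\}$. *)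

theory Defs
  imports "HOL-Analysis.Analysis"
begin

text \<open>A measure u = c_u D_0 + rho_u(r) dr on [0,1] is represented by the pair (c_u, rho_u).\<close>
type_synonym umeas = "real \<times> (real \<Rightarrow> real)"

definition cU :: "umeas \<Rightarrow> real" where "cU u = fst u"
definition rhoU :: "umeas \<Rightarrow> real \<Rightarrow> real" where "rhoU u = snd u"

definition in_U :: "umeas \<Rightarrow> bool" where
  "in_U u \<longleftrightarrow> cU u \<ge> 0
     \<and> set_borel_measurable lborel {0..1} (rhoU u)
     \<and> (\<exists>B. AE x in lborel. x \<in> {0..1} \<longrightarrow> 0 \<le> rhoU u x \<and> rhoU u x \<le> B)"

text \<open>F(r;u) = u([r,1]) : the Dirac mass at 0 lies in [r,1] iff r \<le> 0.\<close>
definition FU :: "real \<Rightarrow> umeas \<Rightarrow> real" where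
  "FU r u = (if r \<le> 0 then cU u else 0) + (LBINT x:{r..1}. rhoU u x)"

definition absdiffU :: "umeas \<Rightarrow> umeas \<Rightarrow> umeas" where
  "absdiffU u v = (\<bar>cU u - cU v\<bar>, \<lambda>x. \<bar>rhoU u x - rhoU v x\<bar>)"

definition U_delta :: "real \<Rightarrow> real \<Rightarrow> umeas set" where
  "U_delta j \<delta> = {u. in_U u \<and> (LBINT x:{0..1}. rhoU u x) > j * \<delta>}"

definition R_delta :: "real \<Rightarrow> real \<Rightarrow> umeas \<Rightarrow> real" where
  "R_delta j \<delta> u = Inf {r \<in> {0..1}. FU r u = j * \<delta>}"

text \<open>K u = j\<delta> D_0 + 1_{[0,R]} u; the Dirac mass at 0 of u lies in [0,R] and is kept.\<close>
definition K_delta :: "real \<Rightarrow> real \<Rightarrow> umeas \<Rightarrow> umeas" where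
  "K_delta j \<delta> u = (j * \<delta> + cU u, \<lambda>x. indicator {0..R_delta j \<delta> u} x * rhoU u x)"

end

theory Submission
  imports Defs
begin

text \<open>
  K cuts the top mass j\<delta> off the density and moves it into the atom at 0.
  For the contraction, let a \<le> b be the cut points of the densities f and g, so that
  the tails of f over [a,1] and of g over [b,1] have the same integral j\<delta>. Almost
  everywhere on [0,1],
    |1[0,a] f - 1[0,b] g| + 1[b,1] g \<le> |f - g| + 1[a,1] f,
  and integrating cancels the equal tails; both atoms grow by j\<delta>, so their distance
  is unchanged. The distance from u to K u is the mass j\<delta> of the cut tail plus the
  mass j\<delta> added to the atom.
\<close>

lemma in_U_set_integrable:
  assumes "in_U u"
  shows "set_integrable lborel {0..1::real} (rhoU u)"
proof -
  obtain B where B: "AE x in lborel. x \<in> {0..1} \<longrightarrow> 0 \<le> rhoU u x \<and> rhoU u x \<le> B"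
    and meas: "set_borel_measurable lborel {0..1} (rhoU u)"
    using assms unfolding in_U_def by blast
  have "set_integrable lborel {0..1::real} (\<lambda>x. B)"
    unfolding set_integrable_def
    using borel_integrable_atLeastAtMost[of 0 1 "\<lambda>x. B"] by (simp add: mult.commute)
  then show ?thesis
    by (rule set_integrable_bound[OF _ meas]) (use B in \<open>eventually_elim, auto\<close>)
qed

lemma in_U_AE_nonneg:
  assumes "in_U u"
  shows "AE x in lborel. x \<in> {0..1::real} \<longrightarrow> 0 \<le> rhoU u x"
proof -
  obtain B where "AE x in lborel. x \<in> {0..1} \<longrightarrow> 0 \<le> rhoU u x \<and> rhoU u x \<le> B"
    using assms unfolding in_U_def by blast
  then show ?thesis by eventually_elim auto
qed

lemma FU_zero: "FU 0 w = cU w + (LBINT x:{0..1}. rhoU w x)"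
  unfolding FU_def by simp

lemma FU_zero_absdiffU:
  "FU 0 (absdiffU u v) = \<bar>cU u - cU v\<bar> + (LBINT x:{0..1}. \<bar>rhoU u x - rhoU v x\<bar>)"
  unfolding FU_zero absdiffU_def cU_def rhoU_def by simp

lemma cU_K_delta [simp]: "cU (K_delta j \<delta> u) = j * \<delta> + cU u"
  unfolding K_delta_def cU_def by simp

lemma rhoU_K_delta [simp]:
  "rhoU (K_delta j \<delta> u) = (\<lambda>x. indicator {0..R_delta j \<delta> u} x * rhoU u x)"
  unfolding K_delta_def rhoU_def by simp

lemma set_integrable_indicator_mult:
  fixes f :: "real \<Rightarrow> real"
  assumes "set_integrable lborel A f" "B \<in> sets lborel"
  shows "set_integrable lborel A (\<lambda>x. indicator B x * f x)"
proof -
  have "integrable lborel (\<lambda>x. indicator B x *\<^sub>R (indicator A x *\<^sub>R f x))"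
    using integrable_mult_indicator[OF assms(2)] assms(1) unfolding set_integrable_def by blast
  moreover have "(\<lambda>x. indicator B x *\<^sub>R (indicator A x *\<^sub>R f x))
      = (\<lambda>x. indicator A x *\<^sub>R (indicator B x * f x))"
    by (auto simp: indicator_def)
  ultimately show ?thesis unfolding set_integrable_def by simp
qed

lemma set_integral_indicator_tail:
  fixes f :: "real \<Rightarrow> real"
  assumes "0 \<le> r"
  shows "(LBINT x:{0..1}. indicator {r..1} x * f x) = (LBINT x:{r..1}. f x)"
  unfolding set_lebesgue_integral_def
  by (rule Bochner_Integration.integral_cong) (use assms in \<open>auto simp: indicator_def\<close>)

lemma continuous_on_tail_integral:
  fixes f :: "real \<Rightarrow> real"
  assumes "set_integrable lborel {0..1} f"
  shows "continuous_on {0..1} (\<lambda>r. LBINT x:{r..1}. f x)"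
proof -
  have "(LBINT x:{r..1}. f x) = integral {r..1} f" if "r \<in> {0..1}" for r
    by (rule set_borel_integral_eq_integral(2), rule set_integrable_subset[OF assms])
      (use that in auto)
  moreover have "continuous_on {0..1} (\<lambda>r. integral {r..1} f)"
    by (rule indefinite_integral_continuous_1'[OF set_borel_integral_eq_integral(1)[OF assms]])
  ultimately show ?thesis by (metis (no_types, lifting) continuous_on_eq)
qed

lemma Inf_in_level_set:
  fixes h :: "real \<Rightarrow> real"
  assumes "continuous_on {a..b} h" "S \<subseteq> {r \<in> {a..b}. h r = c}" "S \<noteq> {}"
  shows "Inf S \<in> {a..b} \<and> h (Inf S) = c"
proof -
  have "closed {r \<in> {a..b}. h r = c}"
    by (rule continuous_closed_preimage_constant[OF assms(1)]) auto
  moreover have "bdd_below S" using assms(2) by (auto intro: bdd_belowI[of _ a])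
  then have "Inf S \<in> closure S" by (rule closure_contains_Inf[OF assms(3)])
  ultimately show ?thesis using closure_minimal[OF assms(2)] by blast
qed

text \<open>The infimum in R_delta is attained away from 0: there the atom makes FU exceed j\<delta>.\<close>

lemma R_delta_cut:
  assumes u: "u \<in> U_delta j \<delta>" and pos: "j * \<delta> > 0"
  shows "0 < R_delta j \<delta> u \<and> R_delta j \<delta> u \<le> 1
    \<and> (LBINT x:{R_delta j \<delta> u..1}. rhoU u x) = j * \<delta>"
proof -
  let ?tail = "\<lambda>r. LBINT x:{r..1}. rhoU u x"
  define S where "S = {r \<in> {0..1}. FU r u = j * \<delta>}"
  have uU: "in_U u" and big: "?tail 0 > j * \<delta>" using u unfolding U_delta_def by auto
  have cont: "continuous_on {0..1} ?tail"
    by (rule continuous_on_tail_integral[OF in_U_set_integrable[OF uU]])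
  have "FU 0 u > j * \<delta>" using big uU unfolding FU_zero in_U_def by simp
  then have S_tail: "S \<subseteq> {r \<in> {0..1}. ?tail r = j * \<delta>} - {0}"
    unfolding S_def FU_def by auto
  have "?tail 1 = 0"
    using set_borel_integral_eq_integral(2)
      [OF set_integrable_subset[OF in_U_set_integrable[OF uU], of "{1..1}"]] by simp
  then obtain r where r: "r \<in> {0..1}" "?tail r = j * \<delta>"
    using IVT2'[of ?tail 1 "j * \<delta>" 0] cont big pos by auto
  with big have "r \<in> S" unfolding S_def FU_def by auto
  then have "Inf S \<in> {0..1} \<and> ?tail (Inf S) = j * \<delta>"
    using Inf_in_level_set[OF cont] S_tail by blast
  with big show ?thesis unfolding R_delta_def S_def[symmetric]
    by (metis atLeastAtMost_iff less_eq_real_def less_irrefl)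
qed

lemma truncation_L1_contraction_ordered:
  fixes f g :: "real \<Rightarrow> real"
  assumes f: "set_integrable lborel {0..1} f" and g: "set_integrable lborel {0..1} g"
    and f_nonneg: "AE x in lborel. x \<in> {0..1} \<longrightarrow> 0 \<le> f x"
    and g_nonneg: "AE x in lborel. x \<in> {0..1} \<longrightarrow> 0 \<le> g x"
    and ab: "0 \<le> a" "a \<le> b"
    and tails: "(LBINT x:{a..1}. f x) = (LBINT x:{b..1}. g x)"
  shows "(LBINT x:{0..1}. \<bar>indicator {0..a} x * f x - indicator {0..b} x * g x\<bar>)
         \<le> (LBINT x:{0..1}. \<bar>f x - g x\<bar>)"
proof -
  let ?L = "\<lambda>x. \<bar>indicator {0..a} x * f x - indicator {0..b} x * g x\<bar>"
  have L: "set_integrable lborel {0..1} ?L"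
    by (intro set_integrable_abs set_integral_diff(1) set_integrable_indicator_mult f g) auto
  have D: "set_integrable lborel {0..1} (\<lambda>x. \<bar>f x - g x\<bar>)"
    by (intro set_integrable_abs set_integral_diff(1) f g)
  have f_tail: "set_integrable lborel {0..1} (\<lambda>x. indicator {a..1} x * f x)"
    and g_tail: "set_integrable lborel {0..1} (\<lambda>x. indicator {b..1} x * g x)"
    by (intro set_integrable_indicator_mult f g; simp)+
  have "(LBINT x:{0..1}. ?L x + indicator {b..1} x * g x)
        \<le> (LBINT x:{0..1}. \<bar>f x - g x\<bar> + indicator {a..1} x * f x)"
  proof (rule set_integral_mono_AE[OF set_integral_add(1)[OF L g_tail]
        set_integral_add(1)[OF D f_tail]])
    show "AE x\<in>{0..1} in lborel.
        ?L x + indicator {b..1} x * g x \<le> \<bar>f x - g x\<bar> + indicator {a..1} x * f x"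
      using f_nonneg g_nonneg AE_lborel_singleton[of a] AE_lborel_singleton[of b]
      by eventually_elim (use ab in \<open>auto simp: indicator_def\<close>)
  qed
  then show ?thesis
    using tails ab set_integral_add(2)[OF L g_tail] set_integral_add(2)[OF D f_tail]
      set_integral_indicator_tail[of a f] set_integral_indicator_tail[of b g]
    by simp
qed

lemma truncation_L1_contraction:
  fixes f g :: "real \<Rightarrow> real"
  assumes "set_integrable lborel {0..1} f" "set_integrable lborel {0..1} g"
    and "AE x in lborel. x \<in> {0..1} \<longrightarrow> 0 \<le> f x"
    and "AE x in lborel. x \<in> {0..1} \<longrightarrow> 0 \<le> g x"
    and "0 \<le> a" "0 \<le> b"
    and "(LBINT x:{a..1}. f x) = (LBINT x:{b..1}. g x)"
  shows "(LBINT x:{0..1}. \<bar>indicator {0..a} x * f x - indicator {0..b} x * g x\<bar>)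
         \<le> (LBINT x:{0..1}. \<bar>f x - g x\<bar>)"
proof (cases "a \<le> b")
  case True
  then show ?thesis using truncation_L1_contraction_ordered assms by blast
next
  case False
  then show ?thesis
    using truncation_L1_contraction_ordered[of g f b a] assms
    by (simp add: abs_minus_commute)
qed

lemma truncation_L1_distance:
  fixes f :: "real \<Rightarrow> real"
  assumes f: "set_integrable lborel {0..1} f"
    and f_nonneg: "AE x in lborel. x \<in> {0..1} \<longrightarrow> 0 \<le> f x"
    and "0 \<le> a"
  shows "(LBINT x:{0..1}. \<bar>indicator {0..a} x * f x - f x\<bar>) \<le> (LBINT x:{a..1}. f x)"
proof -
  have "(LBINT x:{0..1}. \<bar>indicator {0..a} x * f x - f x\<bar>)
      \<le> (LBINT x:{0..1}. indicator {a..1} x * f x)"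
  proof (rule set_integral_mono_AE)
    show "set_integrable lborel {0..1} (\<lambda>x. \<bar>indicator {0..a} x * f x - f x\<bar>)"
      by (intro set_integrable_abs set_integral_diff(1) set_integrable_indicator_mult f) auto
    show "set_integrable lborel {0..1} (\<lambda>x. indicator {a..1} x * f x)"
      by (intro set_integrable_indicator_mult f) auto
    show "AE x\<in>{0..1} in lborel. \<bar>indicator {0..a} x * f x - f x\<bar> \<le> indicator {a..1} x * f x"
      using f_nonneg AE_lborel_singleton[of a]
      by eventually_elim (auto simp: indicator_def)
  qed
  then show ?thesis using set_integral_indicator_tail[OF \<open>0 \<le> a\<close>] by simp
qed

theorem mainTheorem12:
  fixes j \<delta> :: real and u v :: umeas
  assumes "j > 0" and "\<delta> > 0"
    and "u \<in> U_delta j \<delta>" and "v \<in> U_delta j \<delta>"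
  shows "FU 0 (absdiffU (K_delta j \<delta> u) (K_delta j \<delta> v)) \<le> FU 0 (absdiffU u v)
         \<and> FU 0 (absdiffU (K_delta j \<delta> u) u) \<le> 2 * j * \<delta>"
proof -
  have pos: "j * \<delta> > 0" using assms by simp
  have u_U: "in_U u" and v_U: "in_U v" using assms(3,4) unfolding U_delta_def by auto
  note Ru = R_delta_cut[OF assms(3) pos] and Rv = R_delta_cut[OF assms(4) pos]
  have "(LBINT x:{0..1}. \<bar>indicator {0..R_delta j \<delta> u} x * rhoU u x
      - indicator {0..R_delta j \<delta> v} x * rhoU v x\<bar>) \<le> (LBINT x:{0..1}. \<bar>rhoU u x - rhoU v x\<bar>)"
    using Ru Rv by (intro truncation_L1_contraction in_U_set_integrable in_U_AE_nonneg u_U v_U) auto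
  then have contraction:
    "FU 0 (absdiffU (K_delta j \<delta> u) (K_delta j \<delta> v)) \<le> FU 0 (absdiffU u v)"
    unfolding FU_zero_absdiffU by simp
  have "(LBINT x:{0..1}. \<bar>indicator {0..R_delta j \<delta> u} x * rhoU u x - rhoU u x\<bar>) \<le> j * \<delta>"
    using truncation_L1_distance[OF in_U_set_integrable[OF u_U] in_U_AE_nonneg[OF u_U],
        of "R_delta j \<delta> u"] Ru by simp
  then have distance: "FU 0 (absdiffU (K_delta j \<delta> u) u) \<le> 2 * j * \<delta>"
    using pos unfolding FU_zero_absdiffU by (simp add: mult.commute)
  show ?thesis using contraction distance ..
qed

end
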